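(* Let $(M,g,J)$ be an $RK$-manifold of real dimension $2n\ge 4$ which is of pointwise constant antiholomorphic sectional curvature $\nu$ (so $\nu$ is a function on $M$). Then at every point $p\in M$ the curvature tensor $R$ has the form $$R=\frac16\psi+\nu R_1-\frac{2n-1}{3}\,\nu R_2,$$ and moreover $$3S'-(n+1)S=\frac{1}{2n}\bigl(3\tau'-(n+1)\tau\bigr)g,\qquad \nu=\frac{(2n+1)\tau-3\tau'}{8n(n^2-1)}.$$
   Context: $(M,g,J)$ is an almost Hermitian manifold with metric $g$, almost complex structure $J$, and curvature tensor $R$ of type $(0,4)$, with sign convention such that the sectional curvature of a 2-plane $\alpha\subset T_pM$ with orthonormal basis $\{x,y\}$ is $K(\alpha,p)=R(x,y,y,x)$. A 2-plane $\alpha$ is antiholomorphic if $J\alpha\perp\alpha$. $M$ has pointwise constant antiholomorphic sectional curvature $\nu$ if for every $p\in M$, $K(\alpha,p)=\nu(p)$ for all antiholomorphic 2-planes $\alpha\subset T_pM$. $M$ is an $RK$-manifold if $R(x,y,z,u)=R(Jx,Jy,Jz,Ju)$ for all $x,y,z,u\in T_pM$, $p\in M$. Define $R'(x,y,z,u)=R(x,y,Jz,Ju)$. For an orthonormal basis $\{E_1,\dots,E_{2n}\}$ of $T_pM$, the Ricci tensor is $S(y,z)=\sum_i R(E_i,y,z,E_i)$ and the scalar curvature $\tau=\sum_i S(E_i,E_i)$; similarly $S'(y,z)=\sum_i R'(E_i,y,z,E_i)$ and $\tau'=\sum_i S'(E_i,E_i)$. The tensors $R_1,R_2,\psi$ are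 $R_1(x,y,z,u)=g(y,z)g(x,u)-g(x,z)g(y,u)$; $R_2(x,y,z,u)=g(Jy,z)g(Jx,u)-g(Jx,z)g(Jy,u)-2g(Jx,y)g(Jz,u)$; $\psi(x,y,z,u)=g(Jy,z)S(Jx,u)-g(Jx,z)S(Jy,u)-2g(Jx,y)S(Jz,u)+g(Jx,u)S(Jy,z)-g(Jy,u)S(Jx,z)-2g(Jz,u)S(Jx,y)$. *)

theory Defs
  imports "HOL-Analysis.Analysis"
begin

text \<open>Pointwise model: the tangent space T_pM is modelled by a Euclidean space 'a
(of real dimension 2n) whose inner product is the metric g at p, i.e. we work in a
g_p-orthonormal frame.\<close>

definition multilinear4 :: "('a::real_vector \<Rightarrow> 'a \<Rightarrow> 'a \<Rightarrow> 'a \<Rightarrow> real) \<Rightarrow> bool" where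
  "multilinear4 T \<longleftrightarrow>
     (\<forall>y z u. linear (\<lambda>x. T x y z u)) \<and> (\<forall>x z u. linear (\<lambda>y. T x y z u)) \<and>
     (\<forall>x y u. linear (\<lambda>z. T x y z u)) \<and> (\<forall>x y z. linear (\<lambda>u. T x y z u))"

definition curvature_tensor :: "('a::real_inner \<Rightarrow> 'a \<Rightarrow> 'a \<Rightarrow> 'a \<Rightarrow> real) \<Rightarrow> bool" where
  "curvature_tensor R \<longleftrightarrow> multilinear4 R \<and>
     (\<forall>x y z u. R x y z u = - R y x z u) \<and>
     (\<forall>x y z u. R x y z u = - R x y u z) \<and>
     (\<forall>x y z u. R x y z u = R z u x y) \<and>
     (\<forall>x y z u. R x y z u + R y z x u + R z x y u = 0)"

definition almost_hermitian :: "('a::real_inner \<Rightarrow> 'a) \<Rightarrow> bool" where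
  "almost_hermitian J \<longleftrightarrow> linear J \<and> (\<forall>x. J (J x) = - x) \<and>
     (\<forall>x y. inner (J x) (J y) = inner x y)"

definition RK_cond :: "('a \<Rightarrow> 'a) \<Rightarrow> ('a \<Rightarrow> 'a \<Rightarrow> 'a \<Rightarrow> 'a \<Rightarrow> real) \<Rightarrow> bool" where
  "RK_cond J R \<longleftrightarrow> (\<forall>x y z u. R x y z u = R (J x) (J y) (J z) (J u))"

definition antiholomorphic_pair :: "('a::real_inner \<Rightarrow> 'a) \<Rightarrow> 'a \<Rightarrow> 'a \<Rightarrow> bool" where
  "antiholomorphic_pair J x y \<longleftrightarrow> norm x = 1 \<and> norm y = 1 \<and> inner x y = 0 \<and>
     inner (J x) x = 0 \<and> inner (J x) y = 0 \<and> inner (J y) x = 0 \<and> inner (J y) y = 0"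

definition const_antihol_curv :: "('a::real_inner \<Rightarrow> 'a) \<Rightarrow> ('a \<Rightarrow> 'a \<Rightarrow> 'a \<Rightarrow> 'a \<Rightarrow> real) \<Rightarrow> real \<Rightarrow> bool" where
  "const_antihol_curv J R \<nu> \<longleftrightarrow> (\<forall>x y. antiholomorphic_pair J x y \<longrightarrow> R x y y x = \<nu>)"

definition Rprime :: "('a \<Rightarrow> 'a) \<Rightarrow> ('a \<Rightarrow> 'a \<Rightarrow> 'a \<Rightarrow> 'a \<Rightarrow> real) \<Rightarrow> 'a \<Rightarrow> 'a \<Rightarrow> 'a \<Rightarrow> 'a \<Rightarrow> real" where
  "Rprime J R x y z u = R x y (J z) (J u)"

definition ricci :: "('a::euclidean_space \<Rightarrow> 'a \<Rightarrow> 'a \<Rightarrow> 'a \<Rightarrow> real) \<Rightarrow> 'a \<Rightarrow> 'a \<Rightarrow> real" where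
  "ricci R y z = (\<Sum>e\<in>Basis. R e y z e)"

definition scal :: "('a::euclidean_space \<Rightarrow> 'a \<Rightarrow> 'a \<Rightarrow> 'a \<Rightarrow> real) \<Rightarrow> real" where
  "scal R = (\<Sum>e\<in>Basis. ricci R e e)"

definition R1 :: "'a::real_inner \<Rightarrow> 'a \<Rightarrow> 'a \<Rightarrow> 'a \<Rightarrow> real" where
  "R1 x y z u = inner y z * inner x u - inner x z * inner y u"

definition R2 :: "('a::real_inner \<Rightarrow> 'a) \<Rightarrow> 'a \<Rightarrow> 'a \<Rightarrow> 'a \<Rightarrow> 'a \<Rightarrow> real" where
  "R2 J x y z u = inner (J y) z * inner (J x) u - inner (J x) z * inner (J y) u
                  - 2 * inner (J x) y * inner (J z) u"

definition psi :: "('a::real_inner \<Rightarrow> 'a) \<Rightarrow> ('a \<Rightarrow> 'a \<Rightarrow> real) \<Rightarrow> 'a \<Rightarrow> 'a \<Rightarrow> 'a \<Rightarrow> 'a \<Rightarrow> real" where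
  "psi J S x y z u =
     inner (J y) z * S (J x) u - inner (J x) z * S (J y) u - 2 * inner (J x) y * S (J z) u
   + inner (J x) u * S (J y) z - inner (J y) u * S (J x) z - 2 * inner (J z) u * S (J x) y"

end

theory Submission
  imports Defs
begin

text \<open>Let \<open>S\<close> be the Ricci tensor and \<open>k = (2n - 1) \<nu> / 3\<close>. The tensor
  \<open>D = R - \<psi>/6 - \<nu> R\<^sub>1 + k R\<^sub>2\<close> is again an algebraic curvature tensor with the \<open>RK\<close> symmetry;
  it vanishes on antiholomorphic planes, and for this choice of coefficients (using \<open>dim = 2n\<close>)
  its Ricci tensor vanishes. Computing the Ricci tensor of \<open>D\<close> in an orthonormal basis containing
  \<open>x, Jx\<close> (resp. \<open>x, Jx, y, Jy\<close>) shows that \<open>D(x, Jx, Jx, x)\<close> and \<open>D(x, Jx, y, x)\<close> vanish;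
  together with antiholomorphic flatness all sectional curvatures of \<open>D\<close> vanish, so \<open>D = 0\<close>.
  Contracting the resulting formula for \<open>R\<close> against \<open>J\<close> gives the two trace identities.\<close>

lemma linear_eqs:
  fixes f :: "'a::real_vector \<Rightarrow> real"
  assumes "linear f"
  shows "f (a + b) = f a + f b" "f (a - b) = f a - f b" "f (r *\<^sub>R a) = r * f a"
    "f (- a) = - f a" "f 0 = 0"
  using assms by (simp_all add: linear_add linear_diff linear_scale linear_neg linear_0)

lemma multilinear4_linear:
  assumes "multilinear4 T"
  shows "linear (\<lambda>x. T x y z u)" "linear (\<lambda>y. T x y z u)" "linear (\<lambda>z. T x y z u)"
    "linear (\<lambda>u. T x y z u)"
  using assms unfolding multilinear4_def by blast+

lemma multilinear4_simps:
  assumes "multilinear4 T"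
  shows "T (a+b) y z u = T a y z u + T b y z u"
    "T x (a+b) z u = T x a z u + T x b z u"
    "T x y (a+b) u = T x y a u + T x y b u"
    "T x y z (a+b) = T x y z a + T x y z b"
    "T (a-b) y z u = T a y z u - T b y z u"
    "T x (a-b) z u = T x a z u - T x b z u"
    "T x y (a-b) u = T x y a u - T x y b u"
    "T x y z (a-b) = T x y z a - T x y z b"
    "T (r *\<^sub>R a) y z u = r * T a y z u"
    "T x (r *\<^sub>R a) z u = r * T x a z u"
    "T x y (r *\<^sub>R a) u = r * T x y a u"
    "T x y z (r *\<^sub>R a) = r * T x y z a"
    "T (-a) y z u = - T a y z u"
    "T x (-a) z u = - T x a z u"
    "T x y (-a) u = - T x y a u"
    "T x y z (-a) = - T x y z a"
    "T 0 y z u = 0" "T x 0 z u = 0" "T x y 0 u = 0" "T x y z 0 = 0"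
  using linear_eqs[OF multilinear4_linear(1)[OF assms]] linear_eqs[OF multilinear4_linear(2)[OF assms]]
    linear_eqs[OF multilinear4_linear(3)[OF assms]] linear_eqs[OF multilinear4_linear(4)[OF assms]]
  by simp_all

lemma multilinear4_add:
  "multilinear4 A \<Longrightarrow> multilinear4 B \<Longrightarrow> multilinear4 (\<lambda>x y z u. A x y z u + B x y z u)"
  unfolding multilinear4_def by (auto intro: linear_compose_add)

lemma multilinear4_scale:
  assumes "multilinear4 A"
  shows "multilinear4 (\<lambda>x y z u. c * A x y z u)"
  unfolding multilinear4_def
  by (intro conjI allI linearI) (simp_all add: multilinear4_simps[OF assms] algebra_simps)

lemmas bilinear_eqs = bilinear_ladd bilinear_radd bilinear_lsub bilinear_rsub
  bilinear_lmul bilinear_rmul bilinear_lneg bilinear_rneg bilinear_lzero bilinear_rzero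

lemma bilinear_sum_left: "bilinear B \<Longrightarrow> B (sum f A) q = (\<Sum>a\<in>A. B (f a) q)"
  unfolding bilinear_def using linear_sum[of "\<lambda>x. B x q"] by blast

lemma bilinear_sum_right: "bilinear B \<Longrightarrow> B p (sum f A) = (\<Sum>a\<in>A. B p (f a))"
  unfolding bilinear_def using linear_sum[of "\<lambda>y. B p y"] by blast

lemma bilinear_inner: "bilinear (inner :: 'a::real_inner \<Rightarrow> 'a \<Rightarrow> real)"
  unfolding bilinear_def by (auto intro!: linearI simp: inner_add_left inner_add_right)

lemma sum_Basis_inner_linear:
  fixes L :: "'a::euclidean_space \<Rightarrow> real"
  assumes "linear L"
  shows "(\<Sum>e\<in>Basis. inner e a * L e) = L a"
proof -
  have "L a = L (\<Sum>e\<in>Basis. inner a e *\<^sub>R e)" by (simp add: euclidean_representation)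
  also have "\<dots> = (\<Sum>e\<in>Basis. inner a e * L e)"
    by (simp add: linear_sum[OF assms] linear_scale[OF assms])
  finally show ?thesis by (simp add: inner_commute)
qed

definition orthonormal :: "'a::real_inner set \<Rightarrow> bool" where
  "orthonormal V \<longleftrightarrow> finite V \<and> (\<forall>v\<in>V. inner v v = 1) \<and> (\<forall>v\<in>V. \<forall>w\<in>V. v \<noteq> w \<longrightarrow> inner v w = 0)"

definition perp_part :: "'a::real_inner set \<Rightarrow> 'a \<Rightarrow> 'a" where
  "perp_part V e = e - (\<Sum>v\<in>V. inner e v *\<^sub>R v)"

lemma unit_neq_orthogonal: "inner a a = 1 \<Longrightarrow> inner a b = 0 \<Longrightarrow> a \<noteq> b"
  by auto

lemma orthonormal_sum_inner_scaleR:
  fixes f :: "'a::real_inner \<Rightarrow> 'b::real_vector"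
  assumes "orthonormal V" "w \<in> V"
  shows "(\<Sum>v\<in>V. inner w v *\<^sub>R f v) = f w"
proof -
  have "(\<Sum>v\<in>V. inner w v *\<^sub>R f v) = inner w w *\<^sub>R f w + (\<Sum>v\<in>V-{w}. inner w v *\<^sub>R f v)"
    using assms by (simp add: orthonormal_def sum.remove)
  also have "(\<Sum>v\<in>V-{w}. inner w v *\<^sub>R f v) = 0"
    using assms by (intro sum.neutral) (auto simp: orthonormal_def)
  finally show ?thesis using assms by (simp add: orthonormal_def)
qed

lemma orthonormal_sum_inner_mult:
  "orthonormal V \<Longrightarrow> w \<in> V \<Longrightarrow> (\<Sum>v\<in>V. inner w v * f v) = (f w :: real)"
  using orthonormal_sum_inner_scaleR[of V w f] by simp

lemma perp_part_orthogonal: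
  assumes "orthonormal V" "w \<in> V"
  shows "inner (perp_part V e) w = 0"
proof -
  have "(\<Sum>v\<in>V. inner e v * inner v w) = (\<Sum>v\<in>V. inner w v * inner e v)"
    by (simp add: inner_commute mult.commute)
  also have "\<dots> = inner e w" by (rule orthonormal_sum_inner_mult[OF assms])
  finally show ?thesis by (simp add: perp_part_def inner_diff_left inner_sum_left)
qed

lemma perp_part_eq_0: "orthonormal V \<Longrightarrow> w \<in> V \<Longrightarrow> perp_part V w = 0"
  using orthonormal_sum_inner_scaleR[of V w "\<lambda>v. v"] by (simp add: perp_part_def)

lemma linear_perp_part: "linear (perp_part V)"
  by (rule linearI)
    (simp_all add: perp_part_def inner_add_left scaleR_add_left sum.distrib scaleR_sum_right algebra_simps)

text \<open>The trace of a bilinear form may be computed in an orthonormal basis adapted to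
  \<open>V \<oplus> V\<^sup>\<perp>\<close>: the cross terms between \<open>V\<close> and \<open>V\<^sup>\<perp>\<close> cancel.\<close>

lemma trace_split_orthonormal:
  fixes B :: "'a::euclidean_space \<Rightarrow> 'a \<Rightarrow> real"
  assumes V: "orthonormal V" and B: "bilinear B"
  shows "(\<Sum>e\<in>Basis. B e e) = (\<Sum>v\<in>V. B v v) + (\<Sum>e\<in>Basis. B (perp_part V e) (perp_part V e))"
proof -
  define p where "p = perp_part V"
  have e: "e = p e + (\<Sum>v\<in>V. inner e v *\<^sub>R v)" for e by (simp add: p_def perp_part_def)
  have lin_l: "linear (\<lambda>x. B x q)" and lin_r: "linear (\<lambda>y. B q y)" for q
    using B unfolding bilinear_def by auto
  have lin_p_l: "linear (\<lambda>e. B (p e) q)" and lin_p_r: "linear (\<lambda>e. B q (p e))" for q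
    using linear_compose[OF linear_perp_part lin_l] linear_compose[OF linear_perp_part lin_r]
    by (simp_all add: p_def o_def)
  have lin_inner: "linear (\<lambda>e. inner e v * c)" for v c
    by (rule linearI) (simp_all add: inner_add_left distrib_right)
  have expand: "B e e = B (p e) (p e) + (\<Sum>v\<in>V. inner e v * B (p e) v)
      + (\<Sum>v\<in>V. inner e v * B v (p e)) + (\<Sum>w\<in>V. \<Sum>v\<in>V. inner e w * (inner e v * B v w))" for e
    by (subst (1 2) e)
      (simp add: bilinear_eqs[OF B] bilinear_sum_left[OF B] bilinear_sum_right[OF B] sum_distrib_left
        distrib_left sum.distrib algebra_simps)
  have "(\<Sum>e\<in>Basis. B e e) = (\<Sum>e\<in>Basis. B (p e) (p e) + (\<Sum>v\<in>V. inner e v * B (p e) v)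
      + (\<Sum>v\<in>V. inner e v * B v (p e)) + (\<Sum>w\<in>V. \<Sum>v\<in>V. inner e w * (inner e v * B v w)))"
    by (rule sum.cong[OF refl expand])
  also have "\<dots> = (\<Sum>e\<in>Basis. B (p e) (p e))
      + (\<Sum>v\<in>V. \<Sum>e\<in>Basis. inner e v * B (p e) v) + (\<Sum>v\<in>V. \<Sum>e\<in>Basis. inner e v * B v (p e))
      + (\<Sum>w\<in>V. \<Sum>v\<in>V. \<Sum>e\<in>Basis. inner e w * (inner e v * B v w))"
    by (simp only: sum.distrib sum.swap[of _ Basis V])
  also have "\<dots> = (\<Sum>e\<in>Basis. B (p e) (p e)) + (\<Sum>v\<in>V. B (p v) v) + (\<Sum>v\<in>V. B v (p v))
      + (\<Sum>w\<in>V. \<Sum>v\<in>V. inner w v * B v w)"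
    by (simp add: sum_Basis_inner_linear[OF lin_p_l] sum_Basis_inner_linear[OF lin_p_r]
        sum_Basis_inner_linear[OF lin_inner])
  also have "\<dots> = (\<Sum>e\<in>Basis. B (p e) (p e)) + (\<Sum>v\<in>V. B v v)"
    using V by (simp add: p_def perp_part_eq_0 bilinear_eqs[OF B] orthonormal_sum_inner_mult)
  finally show ?thesis by (simp add: p_def)
qed

lemma curvature_tensorD:
  assumes "curvature_tensor D"
  shows "multilinear4 D" "D x y z u = - D y x z u" "D x y z u = - D x y u z"
    "D x y z u = D z u x y" "D x y z u + D y z x u + D z x y u = 0"
  using assms unfolding curvature_tensor_def by blast+

lemmas curvature_tensor_simps = multilinear4_simps[OF curvature_tensorD(1)]

lemma curvature_tensor_reverse:
  assumes "curvature_tensor D"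
  shows "D x y z u = D u z y x"
  using curvature_tensorD(4)[OF assms, of x y z u] curvature_tensorD(2)[OF assms, of z u x y]
    curvature_tensorD(3)[OF assms, of u z x y]
  by linarith

lemma curvature_tensor_diag:
  assumes "curvature_tensor D"
  shows "D a a p q = 0" "D p q a a = 0"
  using curvature_tensorD(2)[OF assms, of a a p q] curvature_tensorD(3)[OF assms, of p q a a]
  by linarith+

lemma bilinear_curvature_outer:
  "curvature_tensor D \<Longrightarrow> bilinear (\<lambda>p q. D p a b q)"
  using curvature_tensorD(1) unfolding bilinear_def multilinear4_def by blast

lemma curvature_tensor_add:
  assumes A: "curvature_tensor A" and B: "curvature_tensor B"
  shows "curvature_tensor (\<lambda>x y z u. A x y z u + B x y z u)"
proof -
  note A' = curvature_tensorD[OF A] and B' = curvature_tensorD[OF B]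
  have "A x y z u + B x y z u = - (A y x z u + B y x z u)"
    and "A x y z u + B x y z u = - (A x y u z + B x y u z)"
    and "A x y z u + B x y z u = A z u x y + B z u x y"
    and "A x y z u + B x y z u + (A y z x u + B y z x u) + (A z x y u + B z x y u) = 0" for x y z u
    using A'(2-5)[of x y z u] B'(2-5)[of x y z u] by linarith+
  then show ?thesis
    unfolding curvature_tensor_def using multilinear4_add[OF A'(1) B'(1)] by blast
qed

lemma curvature_tensor_scale:
  assumes A: "curvature_tensor A"
  shows "curvature_tensor (\<lambda>x y z u. c * A x y z u)"
proof -
  note A' = curvature_tensorD[OF A]
  have "c * A x y z u = - (c * A y x z u)" and "c * A x y z u = - (c * A x y u z)"
    and "c * A x y z u = c * A z u x y"
    and "c * A x y z u + c * A y z x u + c * A z x y u = 0" for x y z u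
    using A'(2-4)[of x y z u] arg_cong[OF A'(5)[of x y z u], of "(*) c"]
    by (simp_all add: algebra_simps)
  then show ?thesis
    unfolding curvature_tensor_def using multilinear4_scale[OF A'(1)] by blast
qed

lemma ricci_add [simp]:
  "ricci (\<lambda>x y z u. A x y z u + B x y z u) y z = ricci A y z + ricci B y z"
  unfolding ricci_def by (simp add: sum.distrib)

lemma ricci_scale [simp]: "ricci (\<lambda>x y z u. c * A x y z u) y z = c * ricci A y z"
  unfolding ricci_def by (simp add: sum_distrib_left)

lemma Rprime_add [simp]:
  "Rprime J (\<lambda>x y z u. A x y z u + B x y z u) = (\<lambda>x y z u. Rprime J A x y z u + Rprime J B x y z u)"
  unfolding Rprime_def ..

lemma Rprime_scale [simp]:
  "Rprime J (\<lambda>x y z u. c * A x y z u) = (\<lambda>x y z u. c * Rprime J A x y z u)"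
  unfolding Rprime_def ..

lemma RK_cond_add:
  "RK_cond J A \<Longrightarrow> RK_cond J B \<Longrightarrow> RK_cond J (\<lambda>x y z u. A x y z u + B x y z u)"
  unfolding RK_cond_def by metis

lemma RK_cond_scale: "RK_cond J A \<Longrightarrow> RK_cond J (\<lambda>x y z u. c * A x y z u)"
  unfolding RK_cond_def by metis

lemma curvature_tensor_eq_0_if_sectional_eq_0:
  assumes D: "curvature_tensor D" and sec: "\<And>x y. D x y y x = 0"
  shows "D x y z u = 0"
proof -
  note simps = curvature_tensor_simps[OF D] and rev = curvature_tensor_reverse[OF D]
  have sec2: "D a y z a = 0" for a y z
    using sec[of a "y + z"] sec[of a y] sec[of a z] rev[of a z y a] by (simp add: simps)
  have skew: "D x y z u = - D x z y u" for x y z u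
    using sec2[of "x + u" y z] sec2[of x y z] sec2[of u y z] rev[of u y z x] by (simp add: simps)
  show ?thesis
    using curvature_tensorD(5)[OF D, of x y z u] skew[of y z x u] curvature_tensorD(2)[OF D, of y x z u]
      curvature_tensorD(2)[OF D, of z x y u] skew[of x z y u]
    by linarith
qed

lemma curvature_tensor_R1: "curvature_tensor (R1 :: 'a::real_inner \<Rightarrow> _)"
proof -
  have "multilinear4 (R1 :: 'a \<Rightarrow> _)"
    unfolding multilinear4_def R1_def
    by (intro conjI allI linearI) (simp_all add: inner_add_left inner_add_right algebra_simps)
  then show ?thesis unfolding curvature_tensor_def by (simp add: R1_def inner_commute algebra_simps)
qed

lemma ricci_R1: "ricci R1 y (z::'a::euclidean_space) = (real DIM('a) - 1) * inner y z"
proof -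
  have "linear (\<lambda>e. inner y e)" by (rule linearI) (simp_all add: inner_add_right)
  then have "(\<Sum>e\<in>Basis. inner e z * inner y e) = inner y z" by (rule sum_Basis_inner_linear)
  then show ?thesis
    unfolding ricci_def R1_def by (simp add: sum_subtractf inner_Basis algebra_simps)
qed

definition antihol_flat :: "('a::real_inner \<Rightarrow> 'a) \<Rightarrow> ('a \<Rightarrow> 'a \<Rightarrow> 'a \<Rightarrow> 'a \<Rightarrow> real) \<Rightarrow> bool" where
  "antihol_flat J D \<longleftrightarrow> (\<forall>x y. inner x y = 0 \<longrightarrow> inner (J x) y = 0 \<longrightarrow> D x y y x = 0)"

locale almost_hermitian_structure =
  fixes J :: "'a::euclidean_space \<Rightarrow> 'a"
  assumes almost_hermitian: "almost_hermitian J"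
begin

lemma linear_J: "linear J"
  using almost_hermitian unfolding almost_hermitian_def by blast

lemma J_J [simp]: "J (J x) = - x"
  using almost_hermitian unfolding almost_hermitian_def by blast

lemma inner_J_J [simp]: "inner (J x) (J y) = inner x y"
  using almost_hermitian unfolding almost_hermitian_def by blast

lemma J_add [simp]: "J (a + b) = J a + J b"
  and J_diff [simp]: "J (a - b) = J a - J b"
  and J_scaleR [simp]: "J (r *\<^sub>R a) = r *\<^sub>R J a"
  and J_minus [simp]: "J (- a) = - J a"
  and J_zero [simp]: "J 0 = 0"
  by (simp_all add: linear_add linear_diff linear_scale linear_neg linear_0 linear_J)

lemma inner_J_left: "inner (J x) y = - inner x (J y)"
  using inner_J_J[of "J x" y] by simp

lemma inner_J_self [simp]: "inner (J x) x = 0" "inner x (J x) = 0"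
  using inner_J_left[of x x] by (auto simp: inner_commute)

lemma RK_cond_R1: "RK_cond J R1"
  unfolding RK_cond_def R1_def by simp

lemma ricci_Rprime_R1: "ricci (Rprime J R1) y z = inner y z"
proof -
  have "linear (\<lambda>e. inner (J y) e)" by (rule linearI) (simp_all add: inner_add_right)
  then have "(\<Sum>e\<in>Basis. inner e (J z) * inner (J y) e) = inner (J y) (J z)"
    by (rule sum_Basis_inner_linear)
  then show ?thesis
    unfolding ricci_def Rprime_def R1_def using inner_J_left[of y] by simp
qed

lemma trace_J_invariant:
  fixes B :: "'a \<Rightarrow> 'a \<Rightarrow> real"
  assumes B: "bilinear B"
  shows "(\<Sum>e\<in>Basis. B (J e) (J e)) = (\<Sum>e\<in>Basis. B e e)"
proof -
  have lin_r: "linear (\<lambda>f. B p f)" and lin_J: "linear (\<lambda>e. B (J e) f)" for p f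
    using B linear_compose[OF linear_J, of "\<lambda>x. B x f"] unfolding bilinear_def by (auto simp: o_def)
  have J_skew: "inner f (J e) = - inner e (J f)" for e f
    using inner_J_left[of f e] inner_commute[of "J f" e] by simp
  have "(\<Sum>e\<in>Basis. B (J e) (J e)) = (\<Sum>e\<in>Basis. \<Sum>f\<in>Basis. inner f (J e) * B (J e) f)"
    by (simp add: sum_Basis_inner_linear[OF lin_r])
  also have "\<dots> = (\<Sum>f\<in>Basis. \<Sum>e\<in>Basis. - (inner e (J f) * B (J e) f))"
    by (subst sum.swap, intro sum.cong refl) (metis J_skew mult_minus_left)
  also have "\<dots> = (\<Sum>f\<in>Basis. - B (J (J f)) f)"
    by (simp add: sum_negf sum_Basis_inner_linear[OF lin_J])
  also have "\<dots> = (\<Sum>f\<in>Basis. B f f)" by (simp add: bilinear_eqs[OF B])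
  finally show ?thesis .
qed

lemma antihol_flat_orthogonal:
  assumes D: "curvature_tensor D" and flat: "antihol_flat J D"
    and "inner w a = 0" "inner (J w) a = 0" "inner w b = 0" "inner (J w) b = 0"
  shows "D w a b w = 0"
  using assms flat[unfolded antihol_flat_def, rule_format, of w "a + b"]
    flat[unfolded antihol_flat_def, rule_format, of w a] flat[unfolded antihol_flat_def, rule_format, of w b]
    curvature_tensor_reverse[OF D, of w b a w]
  by (simp add: curvature_tensor_simps[OF D] inner_add_right)

text \<open>For orthonormal \<open>x, y\<close> with \<open>Jx \<perp> y\<close>, the planes spanned by \<open>x + t Jy\<close> and \<open>y + t Jx\<close>
  are antiholomorphic for every \<open>t\<close>; the vanishing of the linear coefficient in \<open>t\<close> of the
  resulting quartic gives the identity.\<close>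

lemma antihol_flat_linear_coeff:
  assumes D: "curvature_tensor D" and flat: "antihol_flat J D"
    and nx: "inner x x = 1" and ny: "inner y y = 1" and o1: "inner x y = 0" and o2: "inner (J x) y = 0"
  shows "D (J y) y y x + D x (J x) y x = 0"
proof -
  note simps = curvature_tensor_simps[OF D]
  have o3: "inner y x = 0" "inner y (J x) = 0" "inner x (J y) = 0" "inner (J y) x = 0"
    using o1 o2 inner_J_left[of x y] inner_J_left[of y x] by (auto simp: inner_commute)
  have "inner (x + t *\<^sub>R J y) (y + t *\<^sub>R J x) = 0"
    and "inner (J (x + t *\<^sub>R J y)) (y + t *\<^sub>R J x) = 0" for t
    using o1 o2 o3 nx ny by (simp_all add: inner_add_left inner_add_right inner_diff_left)
  then have quartic: "D (x + t *\<^sub>R J y) (y + t *\<^sub>R J x) (y + t *\<^sub>R J x) (x + t *\<^sub>R J y) = 0" for t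
    using flat unfolding antihol_flat_def by blast
  define c1 where "c1 = D (J y) y y x + D x (J x) y x + D x y (J x) x + D x y y (J y)"
  define c2 where "c2 = D (J y) (J x) y x + D (J y) y (J x) x + D (J y) y y (J y)
    + D x (J x) (J x) x + D x (J x) y (J y) + D x y (J x) (J y)"
  define c3 where "c3 = D (J y) (J x) (J x) x + D (J y) (J x) y (J y) + D (J y) y (J x) (J y)
    + D x (J x) (J x) (J y)"
  have "D x y y x = 0" "D (J y) (J x) (J x) (J y) = 0"
    using flat o1 o2 o3 unfolding antihol_flat_def by (auto simp: inner_J_left)
  then have "c1 * t + c2 * t^2 + c3 * t^3 = 0" for t
    using quartic[of t] unfolding c1_def c2_def c3_def
    by (simp add: simps power2_eq_square power3_eq_cube algebra_simps)
  from this[of 1] this[of "-1"] this[of 2] this[of "-2"] have "c1 = 0" by simp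
  then show ?thesis unfolding c1_def
    using curvature_tensor_reverse[OF D, of x y y "J y"] curvature_tensor_reverse[OF D, of x y "J x" x]
    by linarith
qed

lemma orthonormal_J_pair: "inner x x = 1 \<Longrightarrow> orthonormal {x, J x}"
  unfolding orthonormal_def by auto

lemma orthonormal_J_quadruple:
  assumes "inner x x = 1" "inner y y = 1" "inner x y = 0" "inner (J x) y = 0"
  shows "orthonormal {x, J x, y, J y}"
  using assms inner_J_left[of x y] inner_J_left[of y x]
  unfolding orthonormal_def by (auto simp: inner_commute)

text \<open>Ricci-flatness, evaluated in an orthonormal basis containing \<open>x, Jx\<close>, kills the
  holomorphic sectional curvature: all other basis vectors span antiholomorphic planes with \<open>x\<close>.\<close>

lemma holomorphic_sectional_eq_0:
  assumes D: "curvature_tensor D" and flat: "antihol_flat J D" and ric: "\<And>y z. ricci D y z = 0"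
    and nx: "inner x x = 1"
  shows "D x (J x) (J x) x = 0"
proof -
  let ?V = "{x, J x}"
  have V: "orthonormal ?V" by (rule orthonormal_J_pair[OF nx])
  have "D (perp_part ?V e) x x (perp_part ?V e) = 0" for e
  proof -
    have "inner (perp_part ?V e) x = 0" "inner (J (perp_part ?V e)) x = 0"
      using perp_part_orthogonal[OF V, of x e] perp_part_orthogonal[OF V, of "J x" e]
        inner_J_left[of "perp_part ?V e" x]
      by auto
    then show ?thesis by (intro antihol_flat_orthogonal[OF D flat])
  qed
  then have "ricci D x x = (\<Sum>v\<in>?V. D v x x v)"
    using trace_split_orthonormal[OF V bilinear_curvature_outer[OF D, of x x]]
    by (simp add: ricci_def)
  also have "\<dots> = D (J x) x x (J x)"
    using unit_neq_orthogonal[OF nx inner_J_self(2)] curvature_tensor_diag[OF D, of x x x] by simp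
  finally show ?thesis
    using ric curvature_tensorD(4)[OF D, of "J x" x x "J x"] by simp
qed

text \<open>The same trace argument for \<open>ricci D (Jx) y\<close> over \<open>{x, Jx, y, Jy}\<close>, together with the
  \<open>RK\<close> identity, gives \<open>D x (Jx) y x = D (Jy) y y x\<close>, while \<open>antihol_flat_linear_coeff\<close>
  says that the two terms sum to zero.\<close>

lemma mixed_sectional_eq_0_unit:
  assumes D: "curvature_tensor D" and rk: "RK_cond J D" and flat: "antihol_flat J D"
    and ric: "\<And>y z. ricci D y z = 0"
    and nx: "inner x x = 1" and ny: "inner y y = 1" and o1: "inner x y = 0" and o2: "inner (J x) y = 0"
  shows "D x (J x) y x = 0"
proof -
  let ?V = "{x, J x, y, J y}"
  have V: "orthonormal ?V" by (rule orthonormal_J_quadruple[OF nx ny o1 o2])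
  have "inner x (J y) = 0" using o2 inner_J_left[of x y] by simp
  then have neq: "x \<noteq> J x" "x \<noteq> y" "x \<noteq> J y" "J x \<noteq> y" "J x \<noteq> J y" "y \<noteq> J y"
    using unit_neq_orthogonal[of x] unit_neq_orthogonal[of "J x"] unit_neq_orthogonal[of y] nx ny o1 o2
    by auto
  have "D (perp_part ?V e) (J x) y (perp_part ?V e) = 0" for e
  proof (rule antihol_flat_orthogonal[OF D flat])
    let ?p = "perp_part ?V e"
    show "inner ?p (J x) = 0" "inner ?p y = 0"
      using perp_part_orthogonal[OF V] by auto
    show "inner (J ?p) (J x) = 0" "inner (J ?p) y = 0"
      using perp_part_orthogonal[OF V, of x e] perp_part_orthogonal[OF V, of "J y" e]
        inner_J_left[of ?p y] by auto
  qed
  then have "ricci D (J x) y = (\<Sum>v\<in>?V. D v (J x) y v)"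
    using trace_split_orthonormal[OF V bilinear_curvature_outer[OF D, of "J x" y]]
    by (simp add: ricci_def)
  also have "\<dots> = D x (J x) y x + D (J y) (J x) y (J y)"
    using neq curvature_tensor_diag[OF D, of "J x" y "J x"] curvature_tensor_diag[OF D, of y "J x" y]
    by simp
  also have "D (J y) (J x) y (J y) = - D (J y) y y x"
    using rk[unfolded RK_cond_def, rule_format, of "J y" "J x" y "J y"]
      curvature_tensorD(4)[OF D, of y x "J y" y]
    by (simp add: curvature_tensor_simps[OF D])
  finally show ?thesis
    using ric antihol_flat_linear_coeff[OF D flat nx ny o1 o2] by simp
qed

lemma mixed_sectional_eq_0:
  assumes D: "curvature_tensor D" and rk: "RK_cond J D" and flat: "antihol_flat J D"
    and ric: "\<And>y z. ricci D y z = 0"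
    and nx: "inner x x = 1" and o1: "inner x y = 0" and o2: "inner (J x) y = 0"
  shows "D x (J x) y x = 0"
proof (cases "y = 0")
  case True
  then show ?thesis by (simp add: curvature_tensor_simps[OF D])
next
  case False
  define y1 where "y1 = (1 / norm y) *\<^sub>R y"
  have "inner y1 y1 = 1" "inner x y1 = 0" "inner (J x) y1 = 0"
    using False o1 o2 by (simp_all add: y1_def dot_square_norm power2_eq_square)
  from mixed_sectional_eq_0_unit[OF D rk flat ric nx this] have "D x (J x) y1 x = 0" .
  moreover have "y = norm y *\<^sub>R y1" using False by (simp add: y1_def)
  ultimately show ?thesis by (metis curvature_tensor_simps(11)[OF D] mult_zero_right)
qed

text \<open>Split \<open>y\<close> along \<open>x, Jx\<close> and their orthogonal complement: every resulting term
  is one of the three kinds shown to vanish above.\<close>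

lemma sectional_eq_0_unit:
  assumes D: "curvature_tensor D" and rk: "RK_cond J D" and flat: "antihol_flat J D"
    and ric: "\<And>y z. ricci D y z = 0" and nx: "inner x x = 1"
  shows "D x y y x = 0"
proof -
  define y' where "y' = y - inner y x *\<^sub>R x - inner y (J x) *\<^sub>R J x"
  have y: "y = y' + inner y x *\<^sub>R x + inner y (J x) *\<^sub>R J x" by (simp add: y'_def)
  have o1: "inner x y' = 0" and o2: "inner (J x) y' = 0"
    using nx by (simp_all add: y'_def inner_diff_right inner_commute)
  have "D x y' y' x = 0" using flat o1 o2 unfolding antihol_flat_def by blast
  moreover have "D x (J x) (J x) x = 0" by (rule holomorphic_sectional_eq_0[OF D flat ric nx])
  moreover have "D x (J x) y' x = 0" by (rule mixed_sectional_eq_0[OF D rk flat ric nx o1 o2])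
  moreover have "D x y' (J x) x = D x (J x) y' x" by (rule curvature_tensor_reverse[OF D])
  ultimately show ?thesis
    by (subst (1 2) y) (simp add: curvature_tensor_simps[OF D] curvature_tensor_diag[OF D])
qed

lemma curvature_tensor_eq_0_if_antihol_flat:
  assumes D: "curvature_tensor D" and rk: "RK_cond J D" and flat: "antihol_flat J D"
    and ric: "\<And>y z. ricci D y z = 0"
  shows "D x y z u = 0"
proof (rule curvature_tensor_eq_0_if_sectional_eq_0[OF D])
  fix x y
  show "D x y y x = 0"
  proof (cases "x = 0")
    case True
    then show ?thesis by (simp add: curvature_tensor_simps[OF D])
  next
    case False
    define x1 where "x1 = (1 / norm x) *\<^sub>R x"
    have "inner x1 x1 = 1" using False by (simp add: x1_def dot_square_norm power2_eq_square)
    then have "D x1 y y x1 = 0" by (rule sectional_eq_0_unit[OF D rk flat ric])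
    moreover have "x = norm x *\<^sub>R x1" using False by (simp add: x1_def)
    ultimately show ?thesis by (metis curvature_tensor_simps(9,12)[OF D] mult_zero_right)
  qed
qed

end

locale hermitian_form = almost_hermitian_structure J for J :: "'a::euclidean_space \<Rightarrow> 'a" +
  fixes S :: "'a \<Rightarrow> 'a \<Rightarrow> real"
  assumes bilinear_S: "bilinear S" and S_sym: "S a b = S b a" and S_J_J: "S (J a) (J b) = S a b"
begin

lemmas S_eqs = bilinear_eqs[OF bilinear_S]

lemma S_J_right: "S a (J b) = - S (J a) b"
  using S_J_J[of "J a" b] by (simp add: S_eqs)

lemma S_J_skew: "S (J a) b = - S (J b) a"
  using S_J_right[of b a] S_sym[of b "J a"] S_sym[of "J b" a] by simp

lemma S_J_self: "S (J a) a = 0"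
  using S_J_skew[of a a] by simp

lemma inner_J_skew: "inner (J a) b = - inner (J b) a"
  using inner_J_left[of a b] by (simp add: inner_commute)

lemma sum_Basis_inner_S:
  "(\<Sum>e\<in>Basis. inner e a * S b e) = S b a"
  "(\<Sum>e\<in>Basis. inner e a * S e b) = S a b"
  "(\<Sum>e\<in>Basis. inner e a * S (J e) b) = S (J a) b"
proof -
  have "linear (\<lambda>e. S b e)" "linear (\<lambda>e. S e b)" using bilinear_S unfolding bilinear_def by auto
  moreover from this(2) have "linear (\<lambda>e. S (J e) b)"
    using linear_compose[OF linear_J] by (auto simp: o_def)
  ultimately show "(\<Sum>e\<in>Basis. inner e a * S b e) = S b a"
    "(\<Sum>e\<in>Basis. inner e a * S e b) = S a b"
    "(\<Sum>e\<in>Basis. inner e a * S (J e) b) = S (J a) b"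
    by (simp_all add: sum_Basis_inner_linear)
qed

lemma curvature_tensor_psi: "curvature_tensor (psi J S)"
proof -
  have "multilinear4 (psi J S)"
    unfolding multilinear4_def psi_def
    by (intro conjI allI linearI) (simp_all add: S_eqs inner_add_left inner_add_right algebra_simps)
  moreover have "psi J S x y z u = - psi J S y x z u" "psi J S x y z u = - psi J S x y u z"
    "psi J S x y z u = psi J S z u x y" "psi J S x y z u + psi J S y z x u + psi J S z x y u = 0"
    for x y z u
    unfolding psi_def
    using inner_J_skew[of y x] inner_J_skew[of z x] inner_J_skew[of u x] inner_J_skew[of z y]
      inner_J_skew[of u y] inner_J_skew[of u z]
      S_J_skew[of y x] S_J_skew[of z x] S_J_skew[of u x] S_J_skew[of z y] S_J_skew[of u y] S_J_skew[of u z]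
    by (simp_all add: algebra_simps)
  ultimately show ?thesis unfolding curvature_tensor_def by blast
qed

lemma RK_cond_psi: "RK_cond J (psi J S)"
  unfolding RK_cond_def psi_def by (simp add: S_J_J S_eqs inner_J_left S_J_right)

lemma psi_antihol: "inner x y = 0 \<Longrightarrow> inner (J x) y = 0 \<Longrightarrow> psi J S x y y x = 0"
  unfolding psi_def using inner_J_skew[of y x] by simp

lemma ricci_psi: "ricci (psi J S) y z = 6 * S y z"
proof -
  have "psi J S e y z e = inner e (J z) * S (J y) e + 2 * (inner e (J y) * S (J z) e)
     - inner e (J y) * S (J e) z - 2 * (inner e (J z) * S (J e) y)" for e
    unfolding psi_def using S_J_self[of e] inner_J_left[of e z] inner_J_left[of e y]
      inner_commute[of "J y" e] inner_commute[of "J z" e]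
    by (simp add: algebra_simps)
  then have "ricci (psi J S) y z = S (J y) (J z) + 2 * S (J z) (J y) - S (J (J y)) z - 2 * S (J (J z)) y"
    unfolding ricci_def
    by (simp add: sum.distrib sum_subtractf sum_distrib_left[symmetric] sum_Basis_inner_S)
  also have "\<dots> = 6 * S y z" by (simp add: S_J_J S_eqs S_sym[of z y])
  finally show ?thesis .
qed

lemma ricci_Rprime_psi:
  "ricci (Rprime J (psi J S)) y z = (\<Sum>e\<in>Basis. S e e) * inner y z + (real DIM('a) + 2) * S y z"
proof -
  have "psi J S e y (J z) (J e) = inner y z * S e e - inner e z * S y e
     + 2 * (inner e (J y) * S (J z) e) + inner e e * S y z - inner e y * S e z
     - 2 * (inner e (J z) * S (J e) y)" for e
    unfolding psi_def using inner_J_left[of e y] inner_J_left[of e z] inner_J_left[of z e]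
      inner_commute[of z "J e"] inner_commute[of y e] S_J_right[of z e] S_J_right[of "J e" z]
    by (simp add: S_J_J S_eqs algebra_simps)
  then have "ricci (Rprime J (psi J S)) y z = (\<Sum>e\<in>Basis. S e e) * inner y z - S y z
      + 2 * S (J z) (J y) + real DIM('a) * S y z - S y z - 2 * S (J (J z)) y"
    unfolding ricci_def Rprime_def
    by (simp add: sum.distrib sum_subtractf sum_distrib_left[symmetric] sum_distrib_right[symmetric]
        sum_Basis_inner_S inner_Basis mult.commute[of "inner y z"] inner_commute[of y])
  also have "\<dots> = (\<Sum>e\<in>Basis. S e e) * inner y z + (real DIM('a) + 2) * S y z"
    by (simp add: S_J_J S_eqs S_sym[of z y] algebra_simps)
  finally show ?thesis .
qed

end

context almost_hermitian_structure
begin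

lemma hermitian_form_inner: "hermitian_form J inner"
  by unfold_locales (auto simp: bilinear_inner inner_commute)

lemma hermitian_form_ricci:
  assumes R: "curvature_tensor R" and rk: "RK_cond J R"
  shows "hermitian_form J (ricci R)"
proof unfold_locales
  show "bilinear (ricci R)"
    unfolding bilinear_def ricci_def
    by (intro conjI allI linearI) (simp_all add: curvature_tensor_simps[OF R] sum.distrib sum_distrib_left)
  show "ricci R a b = ricci R b a" for a b
    unfolding ricci_def by (rule sum.cong[OF refl]) (rule curvature_tensor_reverse[OF R])
  show "ricci R (J a) (J b) = ricci R a b" for a b
  proof -
    have "ricci R (J a) (J b) = (\<Sum>e\<in>Basis. R (J e) (J (J a)) (J (J b)) (J e))"
      unfolding ricci_def by (rule sum.cong[OF refl]) (rule rk[unfolded RK_cond_def, rule_format])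
    also have "\<dots> = (\<Sum>e\<in>Basis. R (J e) a b (J e))" by (simp add: curvature_tensor_simps[OF R])
    also have "\<dots> = ricci R a b"
      unfolding ricci_def by (rule trace_J_invariant[OF bilinear_curvature_outer[OF R]])
    finally show ?thesis .
  qed
qed

lemma R2_eq_psi_inner: "R2 J = (\<lambda>x y z u. 1/2 * psi J inner x y z u)"
  unfolding R2_def psi_def by (simp add: inner_commute algebra_simps)

lemma curvature_tensor_R2: "curvature_tensor (R2 J)"
  unfolding R2_eq_psi_inner
  by (rule curvature_tensor_scale[OF hermitian_form.curvature_tensor_psi[OF hermitian_form_inner]])

lemma RK_cond_R2: "RK_cond J (R2 J)"
  unfolding R2_eq_psi_inner by (rule RK_cond_scale[OF hermitian_form.RK_cond_psi[OF hermitian_form_inner]])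

lemma R2_antihol: "inner x y = 0 \<Longrightarrow> inner (J x) y = 0 \<Longrightarrow> R2 J x y y x = 0"
  unfolding R2_eq_psi_inner using hermitian_form.psi_antihol[OF hermitian_form_inner] by simp

lemma ricci_R2: "ricci (R2 J) y z = 3 * inner y z"
  unfolding R2_eq_psi_inner ricci_scale hermitian_form.ricci_psi[OF hermitian_form_inner] by simp

lemma ricci_Rprime_R2: "ricci (Rprime J (R2 J)) y z = (real DIM('a) + 1) * inner y z"
  unfolding R2_eq_psi_inner Rprime_scale ricci_scale hermitian_form.ricci_Rprime_psi[OF hermitian_form_inner]
  by (simp add: inner_Basis algebra_simps)

lemma antihol_sectional_curvature:
  assumes R: "curvature_tensor R" and an: "const_antihol_curv J R \<nu>"
    and o1: "inner x y = 0" and o2: "inner (J x) y = 0"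
  shows "R x y y x = \<nu> * (inner x x * inner y y)"
proof (cases "x = 0 \<or> y = 0")
  case True
  then show ?thesis by (auto simp: curvature_tensor_simps[OF R])
next
  case False
  define x1 where "x1 = (1 / norm x) *\<^sub>R x"
  define y1 where "y1 = (1 / norm y) *\<^sub>R y"
  have "antiholomorphic_pair J x1 y1"
    unfolding antiholomorphic_pair_def using False o1 o2 inner_J_left[of y x]
    by (simp add: x1_def y1_def inner_commute)
  then have "R x1 y1 y1 x1 = \<nu>" using an unfolding const_antihol_curv_def by blast
  then have "R (norm x *\<^sub>R x1) (norm y *\<^sub>R y1) (norm y *\<^sub>R y1) (norm x *\<^sub>R x1)
      = \<nu> * ((norm x)^2 * (norm y)^2)"
    by (simp add: curvature_tensor_simps[OF R] power2_eq_square)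
  moreover have x: "norm x *\<^sub>R x1 = x" and y: "norm y *\<^sub>R y1 = y"
    using False by (simp_all add: x1_def y1_def)
  ultimately show ?thesis by (simp only: x y dot_square_norm)
qed

text \<open>The difference between \<open>R\<close> and the claimed expression is a curvature tensor with the
  \<open>RK\<close> symmetry, vanishing on antiholomorphic planes; the coefficients are exactly those for
  which its Ricci tensor vanishes as well (here \<open>dim = 2n\<close> enters).\<close>

lemma curvature_decomposition:
  assumes R: "curvature_tensor R" and rk: "RK_cond J R" and an: "const_antihol_curv J R \<nu>"
    and dim: "DIM('a) = 2 * n"
  shows "R x y z u = 1/6 * psi J (ricci R) x y z u + \<nu> * R1 x y z u
    - (2 * real n - 1) / 3 * \<nu> * R2 J x y z u"
proof -
  interpret S: hermitian_form J "ricci R" by (rule hermitian_form_ricci[OF R rk])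
  define k where "k = (2 * real n - 1) / 3 * \<nu>"
  define D where "D = (\<lambda>x y z u. R x y z u + (-1/6) * psi J (ricci R) x y z u
    + (- \<nu>) * R1 x y z u + k * R2 J x y z u)"
  have "curvature_tensor D"
    unfolding D_def by (intro curvature_tensor_add curvature_tensor_scale R S.curvature_tensor_psi
        curvature_tensor_R1 curvature_tensor_R2)
  moreover have "RK_cond J D"
    unfolding D_def by (intro RK_cond_add RK_cond_scale rk S.RK_cond_psi RK_cond_R1 RK_cond_R2)
  moreover have "antihol_flat J D"
    unfolding antihol_flat_def D_def
    using antihol_sectional_curvature[OF R an] S.psi_antihol R2_antihol by (simp add: R1_def inner_commute)
  moreover have "ricci D y z = 0" for y z
    unfolding D_def ricci_add ricci_scale S.ricci_psi ricci_R1 ricci_R2 dim k_def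
    by (simp add: field_simps)
  ultimately have "D x y z u = 0" by (rule curvature_tensor_eq_0_if_antihol_flat)
  then show ?thesis by (simp add: D_def k_def algebra_simps)
qed

lemma ricci_Rprime_decomposition:
  assumes S: "hermitian_form J S"
    and R: "\<And>x y z u. R x y z u = 1/6 * psi J S x y z u + \<nu> * R1 x y z u - k * R2 J x y z u"
  shows "ricci (Rprime J R) y z = ((\<Sum>e\<in>Basis. S e e) / 6 + \<nu> - k * (real DIM('a) + 1)) * inner y z
    + (real DIM('a) + 2) / 6 * S y z"
proof -
  interpret S: hermitian_form J S by (rule S)
  have R_eq: "R = (\<lambda>x y z u. 1/6 * psi J S x y z u + \<nu> * R1 x y z u + (- k) * R2 J x y z u)"
    using R by (intro ext) simp
  show ?thesis
    unfolding R_eq Rprime_add Rprime_scale ricci_add ricci_scale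
      S.ricci_Rprime_psi ricci_Rprime_R1 ricci_Rprime_R2
    by (simp add: algebra_simps)
qed

lemma RK_const_antihol_identities:
  assumes R: "curvature_tensor R" and rk: "RK_cond J R" and an: "const_antihol_curv J R \<nu>"
    and dim: "DIM('a) = 2 * n" and n2: "n \<ge> 2"
  shows "(\<forall>x y z u. R x y z u =
         1/6 * psi J (ricci R) x y z u + \<nu> * R1 x y z u
         - (2 * real n - 1) / 3 * \<nu> * R2 J x y z u)
   \<and> (\<forall>y z. 3 * ricci (Rprime J R) y z - (real n + 1) * ricci R y z
         = 1 / (2 * real n) * (3 * scal (Rprime J R) - (real n + 1) * scal R) * inner y z)
   \<and> \<nu> = ((2 * real n + 1) * scal R - 3 * scal (Rprime J R))
             / (8 * real n * ((real n)^2 - 1))"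
proof -
  have S: "hermitian_form J (ricci R)" by (rule hermitian_form_ricci[OF R rk])
  define k where "k = (2 * real n - 1) / 3 * \<nu>"
  define c where "c = scal R / 6 + \<nu> - k * (2 * real n + 1)"
  define d where "d = (real n + 1) / 3"
  note decomposition = curvature_decomposition[OF R rk an dim]
  have ricci': "ricci (Rprime J R) y z = c * inner y z + d * ricci R y z" for y z
    using ricci_Rprime_decomposition[OF S decomposition[folded k_def]]
    unfolding c_def d_def dim scal_def[symmetric] by (simp add: algebra_simps)
  have scal': "scal (Rprime J R) = c * (2 * real n) + d * scal R"
    unfolding scal_def[of "Rprime J R"] ricci'
    by (simp add: sum.distrib sum_distrib_left[symmetric] inner_Basis dim scal_def)
  have n: "real n \<ge> 2" using n2 by simp
  then have "(real n)^2 \<ge> 2^2" by (intro power_mono) auto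
  then have nonzero: "8 * real n * ((real n)^2 - 1) \<noteq> 0" using n2 by simp
  have "3 * ricci (Rprime J R) y z - (real n + 1) * ricci R y z
      = 1 / (2 * real n) * (3 * scal (Rprime J R) - (real n + 1) * scal R) * inner y z" for y z
    unfolding ricci' scal' d_def using n by (simp add: field_simps)
  moreover have "\<nu> = ((2 * real n + 1) * scal R - 3 * scal (Rprime J R)) / (8 * real n * ((real n)^2 - 1))"
    unfolding scal' c_def d_def k_def using nonzero by (simp add: field_simps power2_eq_square)
  ultimately show ?thesis using decomposition by blast
qed

end

theorem proposition1:
  fixes M :: "'m set"
    and R :: "'m \<Rightarrow> 'a::euclidean_space \<Rightarrow> 'a \<Rightarrow> 'a \<Rightarrow> 'a \<Rightarrow> real"
    and J :: "'m \<Rightarrow> 'a \<Rightarrow> 'a"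
    and \<nu> :: "'m \<Rightarrow> real"
    and n :: nat
  assumes dim: "DIM('a) = 2 * n" and n2: "n \<ge> 2"
    and curv: "\<And>p. p \<in> M \<Longrightarrow> curvature_tensor (R p)"
    and herm: "\<And>p. p \<in> M \<Longrightarrow> almost_hermitian (J p)"
    and RK: "\<And>p. p \<in> M \<Longrightarrow> RK_cond (J p) (R p)"
    and antihol: "\<And>p. p \<in> M \<Longrightarrow> const_antihol_curv (J p) (R p) (\<nu> p)"
  shows "\<forall>p\<in>M.
     (\<forall>x y z u. R p x y z u =
         1/6 * psi (J p) (ricci (R p)) x y z u + \<nu> p * R1 x y z u
         - (2 * real n - 1) / 3 * \<nu> p * R2 (J p) x y z u)
   \<and> (\<forall>y z. 3 * ricci (Rprime (J p) (R p)) y z - (real n + 1) * ricci (R p) y z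
         = 1 / (2 * real n) * (3 * scal (Rprime (J p) (R p)) - (real n + 1) * scal (R p)) * inner y z)
   \<and> \<nu> p = ((2 * real n + 1) * scal (R p) - 3 * scal (Rprime (J p) (R p)))
             / (8 * real n * ((real n)^2 - 1))"
  using almost_hermitian_structure.RK_const_antihol_identities[OF almost_hermitian_structure.intro[OF herm]
      curv RK antihol dim n2]
  by blast

end
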